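(* Let $(s,g)\in\mathcal{S}\times\mathcal{S}$ with $s\neq g$. Assume the local embedding error is bounded as $$\sup_{s'\in N(s)\cup\{s\}}\bigl|d^*(s',g)-\|\phi(s')-\phi(g)\|\bigr|\le\epsilon_e,$$ and the directional movement error is bounded as $\|z'^*(s,g)-\hat z'(s,g)\|\le\epsilon_d$. If $4\epsilon_e+\epsilon_d<1$, then $\hat\pi(s,g)$ is an optimal action at $(s,g)$, i.e. $d^*(p(s,\hat\pi(s,g)),g)=d^*(s,g)-1$.
   Context: Consider a deterministic Markov decision process with state space $\mathcal{S}$, action space $\mathcal{A}$ and deterministic transition function $p:\mathcal{S}\times\mathcal{A}\to\mathcal{S}$. Let $d^*:\mathcal{S}\times\mathcal{S}\to\mathbb{R}$ be the optimal temporal distance: $d^*(s,g)$ is the minimum number of time steps needed to reach $g$ from $s$, so it is a nonnegative integer and $d^*(s,s)=0$. Let $\phi:\mathcal{S}\to\mathcal{Z}$ be a map into a real Hilbert space with inner product $\langle\cdot,\cdot\rangle$ and induced norm $\|\cdot\|$. Let $N(s):=\{p(s,a):a\in\mathcal{A}\}$ be the set of neighbor states of $s$. For a state $s$ and a goal $g$ define $$z'^*(s,g):=\phi(s)+\frac{\phi(g)-\phi(s)}{\|\phi(g)-\phi(s)\|},$$ $$\hat\pi(s,g):=\arg\max_{a\in\mathcal{A}}\Bigl\langle\phi(s')-\phi(s),\frac{\phi(g)-\phi(s)}{\|\phi(g)-\phi(s)\|}\Bigr\rangle\ \text{ subject to } s'=p(s,a),\ \|\phi(s)-\phi(s')\|\le1,$$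 $$\hat z'(s,g):=\phi\bigl(p(s,\hat\pi(s,g))\bigr).$$ An action $a$ is optimal at $(s,g)$ if it reduces the temporal distance to $g$ by one, i.e. $d^*(p(s,a),g)=d^*(s,g)-1$. *)

theory Defs
  imports "HOL-Analysis.Analysis"
begin

text \<open>Deterministic MDP with transition function p. Executing the action sequence as
from s ends in the state foldl p s as.\<close>

definition reachable :: "('s \<Rightarrow> 'a \<Rightarrow> 's) \<Rightarrow> 's \<Rightarrow> 's \<Rightarrow> bool" where
  "reachable p s g \<longleftrightarrow> (\<exists>as. foldl p s as = g)"

definition dstar :: "('s \<Rightarrow> 'a \<Rightarrow> 's) \<Rightarrow> 's \<Rightarrow> 's \<Rightarrow> real" where
  "dstar p s g = real (LEAST n. \<exists>as. length as = n \<and> foldl p s as = g)"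

definition nbrs :: "('s \<Rightarrow> 'a \<Rightarrow> 's) \<Rightarrow> 's \<Rightarrow> 's set" where
  "nbrs p s = {p s a | a. True}"

definition zstar' :: "('s \<Rightarrow> 'z::real_normed_vector) \<Rightarrow> 's \<Rightarrow> 's \<Rightarrow> 'z" where
  "zstar' \<phi> s g = \<phi> s + (\<phi> g - \<phi> s) /\<^sub>R norm (\<phi> g - \<phi> s)"

definition pihat :: "('s \<Rightarrow> 'a \<Rightarrow> 's) \<Rightarrow> ('s \<Rightarrow> 'z::real_inner) \<Rightarrow> 's \<Rightarrow> 's \<Rightarrow> 'a" where
  "pihat p \<phi> s g = arg_max
      (\<lambda>a. inner (\<phi> (p s a) - \<phi> s) ((\<phi> g - \<phi> s) /\<^sub>R norm (\<phi> g - \<phi> s)))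
      (\<lambda>a. norm (\<phi> s - \<phi> (p s a)) \<le> 1)"

definition zhat' :: "('s \<Rightarrow> 'a \<Rightarrow> 's) \<Rightarrow> ('s \<Rightarrow> 'z::real_inner) \<Rightarrow> 's \<Rightarrow> 's \<Rightarrow> 'z" where
  "zhat' p \<phi> s g = \<phi> (p s (pihat p \<phi> s g))"

end

theory Submission
  imports Defs
begin

text \<open>Write \<open>r = \<parallel>\<phi> g - \<phi> s\<parallel>\<close>. The ideal target \<open>z'*\<close> lies at distance \<open>\<bar>r - 1\<bar>\<close> from \<open>\<phi> g\<close>,
  so the successor \<open>t\<close> reached by the greedy action satisfies \<open>\<parallel>\<phi> t - \<phi> g\<parallel> \<le> \<bar>r - 1\<bar> + \<epsilon>d\<close>. Converting norms
  into temporal distances with error \<open>\<epsilon>e\<close> on both sides gives \<open>d*(t,g) < d*(s,g)\<close> as soon as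
  \<open>4\<epsilon>e + \<epsilon>d < 1\<close>. Since temporal distances are integers and one step costs at most \<open>1\<close>,
  a strict decrease is a decrease by exactly one.\<close>

lemma dstar_le_length: "foldl p s as = g \<Longrightarrow> dstar p s g \<le> real (length as)"
  unfolding dstar_def by (auto intro!: Least_le)

lemma dstar_attained:
  assumes "reachable p s g"
  obtains as where "foldl p s as = g" "dstar p s g = real (length as)"
proof -
  from assms have "\<exists>n as. length as = n \<and> foldl p s as = g"
    unfolding reachable_def by blast
  from LeastI_ex[OF this] show ?thesis
    using that unfolding dstar_def by auto
qed

lemma dstar_ge_1:
  assumes "reachable p s g" "s \<noteq> g"
  shows "dstar p s g \<ge> 1"
proof -
  obtain as where "foldl p s as = g" "dstar p s g = real (length as)"
    using dstar_attained[OF assms(1)] .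
  with assms(2) show ?thesis by (cases as) auto
qed

lemma dstar_le_succ:
  assumes "reachable p (p s a) g"
  shows "dstar p s g \<le> dstar p (p s a) g + 1"
proof -
  obtain bs where "foldl p (p s a) bs = g" "dstar p (p s a) g = real (length bs)"
    using dstar_attained[OF assms] .
  then show ?thesis
    using dstar_le_length[of p s "a # bs" g] by simp
qed

lemma dstar_succ_eq_if_less:
  assumes "reachable p (p s a) g" and "dstar p (p s a) g < dstar p s g"
  shows "dstar p (p s a) g = dstar p s g - 1"
proof -
  obtain m n where "dstar p (p s a) g = real m" "dstar p s g = real n"
    unfolding dstar_def by blast
  with dstar_le_succ[OF assms(1)] assms(2) show ?thesis by simp
qed

lemma norm_zstar'_minus_goal:
  "norm (zstar' \<phi> s g - \<phi> g) \<le> \<bar>norm (\<phi> g - \<phi> s) - 1\<bar>"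
proof (cases "\<phi> g = \<phi> s")
  case False
  define r where "r = norm (\<phi> g - \<phi> s)"
  have "r > 0" using False by (simp add: r_def)
  have "zstar' \<phi> s g - \<phi> g = (1 / r - 1) *\<^sub>R (\<phi> g - \<phi> s)"
    by (simp add: zstar'_def r_def algebra_simps divide_inverse)
  then have "norm (zstar' \<phi> s g - \<phi> g) = \<bar>1 / r - 1\<bar> * r"
    by (simp add: r_def)
  also have "\<dots> = \<bar>r - 1\<bar>"
    using \<open>r > 0\<close> by (simp add: abs_if field_simps)
  finally show ?thesis by (simp add: r_def)
qed (simp add: zstar'_def)

theorem theoremC1:
  fixes p :: "'s \<Rightarrow> 'a \<Rightarrow> 's"
    and \<phi> :: "'s \<Rightarrow> 'z::{real_inner, complete_space}"
    and s g :: 's and \<epsilon>e \<epsilon>d :: real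
  assumes reach: "\<forall>s'\<in>nbrs p s \<union> {s}. reachable p s' g"
    and neq: "s \<noteq> g"
    and emb: "\<forall>s'\<in>nbrs p s \<union> {s}. \<bar>dstar p s' g - norm (\<phi> s' - \<phi> g)\<bar> \<le> \<epsilon>e"
    and dir: "norm (zstar' \<phi> s g - zhat' p \<phi> s g) \<le> \<epsilon>d"
    and small: "4 * \<epsilon>e + \<epsilon>d < 1"
  shows "dstar p (p s (pihat p \<phi> s g)) g = dstar p s g - 1"
proof -
  define t where "t = p s (pihat p \<phi> s g)"
  have t: "t \<in> nbrs p s" unfolding t_def nbrs_def by blast
  have "dstar p t g < dstar p s g"
  proof -
    have "reachable p s g" using reach by blast
    then have "dstar p s g \<ge> 1" using neq by (rule dstar_ge_1)
    moreover have "\<bar>dstar p s g - norm (\<phi> g - \<phi> s)\<bar> \<le> \<epsilon>e"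
      using emb norm_minus_commute[of "\<phi> s" "\<phi> g"] by simp
    moreover have "\<bar>dstar p t g - norm (\<phi> t - \<phi> g)\<bar> \<le> \<epsilon>e" using emb t by blast
    moreover have "norm (\<phi> t - \<phi> g) \<le> \<bar>norm (\<phi> g - \<phi> s) - 1\<bar> + \<epsilon>d"
    proof -
      have "dist (\<phi> t) (\<phi> g) \<le> dist (zstar' \<phi> s g) (\<phi> t) + dist (zstar' \<phi> s g) (\<phi> g)"
        by (rule dist_triangle3)
      then show ?thesis
        using norm_zstar'_minus_goal[of \<phi> s g] dir unfolding dist_norm zhat'_def t_def by linarith
    qed
    \<comment> \<open>if \<open>\<parallel>\<phi> g - \<phi> s\<parallel> < 1\<close>, then \<open>d*(s,g) \<ge> 1\<close> forces it within \<open>\<epsilon>e\<close> of \<open>1\<close>\<close>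
    ultimately show ?thesis using small by (simp add: abs_le_iff abs_if split: if_splits)
  qed
  moreover have "reachable p t g" using reach t by blast
  ultimately show ?thesis unfolding t_def by (intro dstar_succ_eq_if_less)
qed

end
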